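(* Let $g_{n,j}$ be the number of decorated partial dual skew Dyck paths consisting of $n$ steps and ending at level $j$, and let $G(z,u)=\sum_{n,j\ge0}g_{n,j}z^nu^j$. Put $W=\sqrt{1-6z^2+5z^4}$, with the branch satisfying $W=1$ at $z=0$, and $$s_1=\frac{2z}{1+z^2-W},\qquad S=\frac{1+z^2-W}{2z^2}.$$ Then $$G(z,u)=\frac{3z^2-3+W}{2z(2-z^2)(u-s_1)},$$ and for every $j\ge 0$, $$[u^j]G(z,u)=\frac{3z^2-3+W}{2(z^2-2)}\,z^jS^{j+1}.$$
   Context: A decorated (partial) dual skew Dyck path is a lattice path with the following properties. - It starts at $(0,0)$. - It uses down-steps $(1,-1)$ and up-steps $(1,1)$. - Each up-step is coloured either black or blue. - It never goes below the $x$-axis. - A down-step is never immediately followed by a blue up-step, and a blue up-step is never immediately followed by a down-step. The path need not end on the $x$-axis; its level is the final $y$-coordinate. The empty path counts, with $n=0$ and $j=0$. These paths are the mirror images of skew Dyck path prefixes, with a blue up-step encoding a step $(-1,1)$. *)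

theory Defs
  imports "HOL-Analysis.Analysis"
begin

datatype step = UpBlack | UpBlue | Down

fun step_delta :: "step \<Rightarrow> int" where
  "step_delta UpBlack = 1"
| "step_delta UpBlue = 1"
| "step_delta Down = -1"

definition path_level :: "step list \<Rightarrow> int" where
  "path_level xs = (\<Sum>s\<leftarrow>xs. step_delta s)"

definition dsd_path :: "step list \<Rightarrow> bool" where
  "dsd_path xs \<longleftrightarrow>
     (\<forall>k\<le>length xs. path_level (take k xs) \<ge> 0) \<and>
     (\<forall>i. Suc i < length xs \<longrightarrow>
        \<not> (xs ! i = Down \<and> xs ! Suc i = UpBlue) \<and>
        \<not> (xs ! i = UpBlue \<and> xs ! Suc i = Down))"

definition g :: "nat \<Rightarrow> nat \<Rightarrow> nat" where
  "g n j = card {xs. length xs = n \<and> dsd_path xs \<and> path_level xs = int j}"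

definition Wf :: "complex \<Rightarrow> complex" where
  "Wf z = csqrt (1 - 6 * z^2 + 5 * z^4)"

definition s1 :: "complex \<Rightarrow> complex" where
  "s1 z = 2 * z / (1 + z^2 - Wf z)"

definition Sf :: "complex \<Rightarrow> complex" where
  "Sf z = (1 + z^2 - Wf z) / (2 * z^2)"

end

theory Submission
  imports Defs "HOL-Complex_Analysis.Complex_Analysis"
begin

(* Classify the paths by their last step. Removing the last step gives a linear recurrence, in the length, for the numbers
   of paths ending at level l with last step Down, UpBlue and UpBlack. Let
   B = 1/S = (1 + z^2 + W) / (4 - 2 z^2), the root of (z^2 - 2) B^2 + (1 + z^2) B - z^2 = 0
   with B(0) = 1/2, and Q = z/B = z S. The power series (1/B - 2) Q^l, B Q^l and (1 - B) Q^l
   (for l > 0; 0 and 1 at l = 0) satisfy the same recurrence, hence they are the generating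
   functions of these three classes. Their sum (1/B - 1) Q^j is the generating function of
   the paths ending at level j, and summing the geometric series over j gives G(z, u).
   All series converge for |z|, |u| < 1/3, since B is holomorphic and nonzero on that disc
   and g n j <= 3^n. *)

section \<open>Removing the last step of a path\<close>

lemma path_level_Nil [simp]: "path_level [] = 0"
  by (simp add: path_level_def)

lemma path_level_append [simp]: "path_level (xs @ ys) = path_level xs + path_level ys"
  by (simp add: path_level_def)

lemma path_level_singleton [simp]: "path_level [s] = step_delta s"
  by (simp add: path_level_def)

definition compatible_steps :: "step \<Rightarrow> step \<Rightarrow> bool" where
  "compatible_steps p s \<longleftrightarrow> \<not> (p = Down \<and> s = UpBlue) \<and> \<not> (p = UpBlue \<and> s = Down)"

text \<open>The empty path counts as ending in a black up-step: any step may follow either.\<close>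

definition last_step :: "step list \<Rightarrow> step" where
  "last_step xs = (if xs = [] then UpBlack else last xs)"

lemma all_le_Suc_iff: "(\<forall>k\<le>Suc n. P k) \<longleftrightarrow> (\<forall>k\<le>n. P k) \<and> P (Suc n)"
  by (auto simp: le_Suc_eq)

lemma all_Suc_less_Suc_iff:
  "(\<forall>i. Suc i < Suc n \<longrightarrow> P i) \<longleftrightarrow> (\<forall>i. Suc i < n \<longrightarrow> P i) \<and> (0 < n \<longrightarrow> P (n - 1))"
  by (auto simp: less_Suc_eq)

lemma dsd_path_Nil: "dsd_path []"
  by (simp add: dsd_path_def)

lemma dsd_path_snoc:
  "dsd_path (xs @ [s]) \<longleftrightarrow>
     dsd_path xs \<and> 0 \<le> path_level xs + step_delta s \<and> compatible_steps (last_step xs) s"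
  unfolding dsd_path_def length_append_singleton all_le_Suc_iff all_Suc_less_Suc_iff
  by (auto simp: nth_append last_conv_nth compatible_steps_def last_step_def)

lemma UNIV_step: "(UNIV :: step set) = {UpBlack, UpBlue, Down}"
  using step.exhaust by auto

instance step :: finite
  by standard (simp add: UNIV_step)

lemma card_UNIV_step: "card (UNIV :: step set) = 3"
  by (simp add: UNIV_step)

lemma compatible_steps_before:
  "{p. compatible_steps p Down} = {Down, UpBlack}"
  "{p. compatible_steps p UpBlue} = {UpBlue, UpBlack}"
  "{p. compatible_steps p UpBlack} = UNIV"
  using step.exhaust by (auto simp: compatible_steps_def)

lemma finite_lists_length: "finite {xs :: 'a :: finite list. length xs = n}"
  using finite_lists_length_eq[of "UNIV :: 'a set" n] by simp

lemma g_le: "g n j \<le> 3 ^ n"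
proof -
  have "g n j \<le> card {xs :: step list. length xs = n}"
    unfolding g_def by (rule card_mono[OF finite_lists_length]) auto
  also have "\<dots> = 3 ^ n"
    using card_lists_length_eq[of "UNIV :: step set" n] by (simp add: card_UNIV_step)
  finally show ?thesis .
qed

definition paths_ending :: "nat \<Rightarrow> int \<Rightarrow> step \<Rightarrow> step list set" where
  "paths_ending n l s =
     {xs. length xs = n \<and> dsd_path xs \<and> path_level xs = l \<and> last_step xs = s}"

lemma finite_paths_ending: "finite (paths_ending n l s)"
  by (rule finite_subset[OF _ finite_lists_length[of n]]) (auto simp: paths_ending_def)

lemma g_eq_sum_card_paths_ending: "g n j = (\<Sum>s\<in>UNIV. card (paths_ending n (int j) s))"
proof -
  have "{xs. length xs = n \<and> dsd_path xs \<and> path_level xs = int j} =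
        (\<Union>s. paths_ending n (int j) s)"
    by (auto simp: paths_ending_def)
  also have "card \<dots> = (\<Sum>s\<in>UNIV. card (paths_ending n (int j) s))"
    by (rule card_UN_disjoint) (auto simp: finite_paths_ending, auto simp: paths_ending_def)
  finally show ?thesis
    unfolding g_def .
qed

lemma paths_ending_neg: "l < 0 \<Longrightarrow> paths_ending n l s = {}"
  unfolding paths_ending_def dsd_path_def by (force dest: spec[of _ "length _"])

lemma card_paths_ending_0: "card (paths_ending 0 l s) = (if l = 0 \<and> s = UpBlack then 1 else 0)"
proof -
  have "paths_ending 0 l s = (if l = 0 \<and> s = UpBlack then {[]} else {})"
    by (auto simp: paths_ending_def last_step_def dsd_path_Nil)
  then show ?thesis by simp
qed

lemma paths_ending_Suc:
  assumes "0 \<le> l"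
  shows "paths_ending (Suc n) l s =
           (\<lambda>xs. xs @ [s]) ` (\<Union>p\<in>{p. compatible_steps p s}. paths_ending n (l - step_delta s) p)"
proof (intro equalityI subsetI)
  fix ys assume ys: "ys \<in> paths_ending (Suc n) l s"
  then obtain xs where "ys = xs @ [s]"
    by (cases ys rule: rev_exhaust) (auto simp: paths_ending_def last_step_def)
  with ys show "ys \<in> (\<lambda>xs. xs @ [s]) ` (\<Union>p\<in>{p. compatible_steps p s}. paths_ending n (l - step_delta s) p)"
    by (auto simp: paths_ending_def dsd_path_snoc)
qed (use assms in \<open>auto simp: paths_ending_def dsd_path_snoc last_step_def\<close>)

lemma card_paths_ending_Suc:
  assumes "0 \<le> l"
  shows "card (paths_ending (Suc n) l s) =
           (\<Sum>p | compatible_steps p s. card (paths_ending n (l - step_delta s) p))"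
  unfolding paths_ending_Suc[OF assms]
  by (subst card_image, simp add: inj_on_def, rule card_UN_disjoint)
     (auto simp: finite_paths_ending, auto simp: paths_ending_def)

section \<open>The series \<open>1/S\<close>\<close>

lemma Wf_squared: "Wf z ^ 2 = 1 - 6 * z^2 + 5 * z^4"
  by (simp add: Wf_def)

lemma Wf_0: "Wf 0 = 1"
  by (simp add: Wf_def)

lemma norm_power2_less_ninth: "norm (z :: 'a :: real_normed_div_algebra) < 1/3 \<Longrightarrow> norm (z^2) < 1/9"
  unfolding norm_power using power_strict_mono[of "norm z" "1/3" 2] by (simp add: power_divide)

text \<open>This is \<open>1/S\<close> (lemma \<open>Sf_eq_inverse_S_inv\<close>), written so that it is visibly
  holomorphic at 0.\<close>

definition S_inv :: "complex \<Rightarrow> complex" where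
  "S_inv z = (1 + z^2 + Wf z) / (4 - 2 * z^2)"

lemma power2_neq_2: "norm (z :: complex) < 1/3 \<Longrightarrow> z^2 \<noteq> 2"
  using norm_power2_less_ninth[of z] by auto

lemma Re_radicand_pos:
  assumes "norm z < 1/3"
  shows "0 < Re (1 - 6 * z^2 + 5 * z^4)"
proof -
  have z2: "norm (z^2) < 1/9"
    using norm_power2_less_ninth[OF assms] .
  have "norm (z^4) = norm (z^2) ^ 2"
    by (simp add: norm_power)
  also have "\<dots> < (1/9)^2"
    using z2 by (intro power_strict_mono) auto
  finally have z4: "norm (z^4) < 1/81"
    by (simp add: power_divide)
  have "norm (6 * z^2 - 5 * z^4) \<le> 6 * norm (z^2) + 5 * norm (z^4)"
    using norm_triangle_ineq4[of "6 * z^2" "5 * z^4"] by (simp add: norm_mult)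
  with z2 z4 have "norm (6 * z^2 - 5 * z^4) < 1"
    by linarith
  then show ?thesis
    using complex_Re_le_cmod[of "6 * z^2 - 5 * z^4"] by simp
qed

lemma norm_S_inv_gt:
  assumes "norm z < 1/3"
  shows "1/5 < norm (S_inv z)"
proof -
  have z2: "norm (z^2) < 1/9"
    using norm_power2_less_ninth[OF assms] .
  have "0 \<le> Re (Wf z)"
    unfolding Wf_def by (rule Re_csqrt)
  then have "8/9 < Re (1 + z^2 + Wf z)"
    using z2 abs_Re_le_cmod[of "z^2"] by simp
  then have num: "8/9 < norm (1 + z^2 + Wf z)"
    using complex_Re_le_cmod by (rule less_le_trans)
  have "norm (4 - 2 * z^2) \<le> 4 + 2 * norm (z^2)"
    using norm_triangle_ineq4[of 4 "2 * z^2"] by (simp add: norm_mult)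
  with z2 have den: "norm (4 - 2 * z^2) < 38/9"
    by linarith
  have "1/5 < (8/9) / (38/9 :: real)"
    by simp
  also have "\<dots> < norm (1 + z^2 + Wf z) / norm (4 - 2 * z^2)"
    using num den power2_neq_2[OF assms] by (intro frac_less2) simp_all
  finally show ?thesis
    by (simp add: S_inv_def norm_divide)
qed

lemma S_inv_nonzero: "norm z < 1/3 \<Longrightarrow> S_inv z \<noteq> 0"
  using norm_S_inv_gt[of z] by auto

lemma S_inv_holomorphic: "S_inv holomorphic_on ball 0 (1/3)"
proof -
  have Wf: "Wf holomorphic_on ball 0 (1/3)"
    unfolding Wf_def[abs_def]
  proof (rule holomorphic_on_csqrt')
    fix z :: complex assume "z \<in> ball 0 (1/3)"
    then show "1 - 6 * z^2 + 5 * z^4 \<notin> \<real>\<^sub>\<le>\<^sub>0"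
      using Re_radicand_pos[of z] by (auto simp: complex_nonpos_Reals_iff)
  qed (intro holomorphic_intros)
  have "4 - 2 * z^2 \<noteq> 0" if "z \<in> ball 0 (1/3)" for z :: complex
    using power2_neq_2[of z] that by auto
  then show ?thesis
    unfolding S_inv_def[abs_def] by (intro holomorphic_intros Wf)
qed

lemma S_inv_quadratic:
  assumes "z^2 \<noteq> 2"
  shows "(z^2 - 2) * S_inv z ^ 2 + (1 + z^2) * S_inv z - z^2 = 0"
proof -
  have "S_inv z * (4 - 2 * z^2) = 1 + z^2 + Wf z"
    using assms by (simp add: S_inv_def)
  then show ?thesis
    using Wf_squared[of z] assms by algebra
qed

lemma Sf_eq_inverse_S_inv:
  assumes "z \<noteq> 0" "z^2 \<noteq> 2"
  shows "Sf z = inverse (S_inv z)"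
proof -
  have "(1 + z^2 - Wf z) * (1 + z^2 + Wf z) = 4 * z^2 * (2 - z^2)"
    using Wf_squared[of z] by algebra
  moreover have "4 * z^2 * (2 - z^2) \<noteq> 0"
    using assms by simp
  ultimately have "Sf z * S_inv z = 1"
    by (auto simp: Sf_def S_inv_def field_simps)
  then show ?thesis
    by (metis inverse_unique mult.commute)
qed

lemma one_minus_S_inv: "z^2 \<noteq> 2 \<Longrightarrow> 1 - S_inv z = (3 * z^2 - 3 + Wf z) / (2 * (z^2 - 2))"
  by (simp add: S_inv_def field_simps)

lemma z_times_s1: "z * s1 z = inverse (Sf z)"
  by (simp add: s1_def Sf_def power2_eq_square)

section \<open>Generating functions by level and last step\<close>

definition B_fps :: "complex fps" where
  "B_fps = fps_expansion S_inv 0"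

definition Q_fps :: "complex fps" where
  "Q_fps = fps_X * inverse B_fps"

lemma has_fps_expansion_S_inv: "S_inv has_fps_expansion B_fps"
  unfolding B_fps_def by (rule has_fps_expansion_fps_expansion[OF _ _ S_inv_holomorphic]) auto

lemma B_fps_nth_0: "fps_nth B_fps 0 = 1/2"
  using fps_nth_fps_expansion[OF has_fps_expansion_S_inv, of 0] by (simp add: S_inv_def Wf_0)

lemma B_fps_quadratic: "(fps_X^2 - 2) * B_fps^2 + (1 + fps_X^2) * B_fps - fps_X^2 = 0"
proof -
  define f where "f z = (z^2 - 2) * S_inv z ^ 2 + (1 + z^2) * S_inv z - z^2" for z
  have "eventually (\<lambda>z. z \<in> ball 0 (1/3)) (nhds 0)"
    by (intro eventually_nhds_in_open) auto
  then have vanishes: "eventually (\<lambda>z. 0 = f z) (nhds 0)"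
    by eventually_elim (simp add: f_def S_inv_quadratic power2_neq_2)
  have "f has_fps_expansion (fps_X^2 - 2) * B_fps^2 + (1 + fps_X^2) * B_fps - fps_X^2"
    unfolding f_def[abs_def] by (intro fps_expansion_intros has_fps_expansion_S_inv)
  then have "(\<lambda>_. 0) has_fps_expansion (fps_X^2 - 2) * B_fps^2 + (1 + fps_X^2) * B_fps - fps_X^2"
    by (simp only: has_fps_expansion_cong[OF vanishes refl])
  then show ?thesis
    using fps_expansion_unique_complex has_fps_expansion_0 by blast
qed

lemma inverse_B_fps_times_B_fps: "inverse B_fps * B_fps = 1"
  by (rule inverse_mult_eq_1) (simp add: B_fps_nth_0)

lemma B_fps_times_Q_fps: "B_fps * Q_fps = fps_X"
  using inverse_B_fps_times_B_fps unfolding Q_fps_def by algebra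

lemma one_minus_B_fps_times_Q_fps: "(1 - B_fps) * Q_fps = fps_X * (inverse B_fps - 1)"
  using inverse_B_fps_times_B_fps unfolding Q_fps_def by algebra

lemma inverse_B_fps_minus_2: "fps_X * Q_fps * (inverse B_fps - 1 - B_fps) = inverse B_fps - 2"
  using inverse_B_fps_times_B_fps B_fps_quadratic unfolding Q_fps_def by algebra

lemma nat_one_plus_int: "nat (1 + int k) = Suc k"
  by simp

fun level_gf :: "step \<Rightarrow> int \<Rightarrow> complex fps" where
  "level_gf Down l = (if l < 0 then 0 else (inverse B_fps - 2) * Q_fps ^ nat l)"
| "level_gf UpBlue l = (if l \<le> 0 then 0 else B_fps * Q_fps ^ nat l)"
| "level_gf UpBlack l = (if l < 0 then 0 else if l = 0 then 1 else (1 - B_fps) * Q_fps ^ nat l)"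

lemma level_gf_UpBlue_plus_UpBlack: "level_gf UpBlue (int k) + level_gf UpBlack (int k) = Q_fps ^ k"
  by (cases k) (simp_all add: nat_one_plus_int algebra_simps)

lemma sum_level_gf: "(\<Sum>s\<in>UNIV. level_gf s (int k)) = (inverse B_fps - 1) * Q_fps ^ k"
  by (cases k) (simp_all add: UNIV_step nat_one_plus_int algebra_simps)

lemma level_gf_rec:
  assumes "0 \<le> l"
  shows "level_gf s l =
           (if s = UpBlack \<and> l = 0 then 1 else 0) +
           fps_X * (\<Sum>p | compatible_steps p s. level_gf p (l - step_delta s))"
proof -
  obtain k where l: "l = int k"
    using assms nonneg_eq_int by blast
  show ?thesis
  proof (cases s)
    case Down
    have "fps_X * (level_gf Down (l + 1) + level_gf UpBlack (l + 1)) =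
            fps_X * Q_fps * (inverse B_fps - 1 - B_fps) * Q_fps ^ k"
      by (simp add: l nat_one_plus_int algebra_simps)
    then show ?thesis
      by (simp add: Down l compatible_steps_before inverse_B_fps_minus_2)
  next
    case UpBlue
    then show ?thesis
    proof (cases k)
      case (Suc k')
      have "level_gf UpBlue (1 + int k') = B_fps * Q_fps * Q_fps ^ k'"
        by (simp add: nat_one_plus_int)
      then show ?thesis
        using level_gf_UpBlue_plus_UpBlack[of k']
        by (simp add: UpBlue l Suc compatible_steps_before B_fps_times_Q_fps)
    qed (simp add: l compatible_steps_before)
  next
    case UpBlack
    then show ?thesis
    proof (cases k)
      case (Suc k')
      have "level_gf UpBlack (1 + int k') = (1 - B_fps) * Q_fps * Q_fps ^ k'"
        by (simp add: nat_one_plus_int)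
      then show ?thesis
        using sum_level_gf[of k']
        by (simp add: UpBlack l Suc compatible_steps_before one_minus_B_fps_times_Q_fps)
    qed (simp add: l compatible_steps_before UNIV_step)
  qed
qed

lemma fps_nth_level_gf: "fps_nth (level_gf s l) n = of_nat (card (paths_ending n l s))"
proof (induction n arbitrary: s l)
  case 0
  show ?case
  proof (cases "l < 0")
    case True
    then show ?thesis by (cases s) (simp_all add: paths_ending_neg)
  next
    case False
    then show ?thesis
      by (subst level_gf_rec) (simp_all add: card_paths_ending_0)
  qed
next
  case (Suc n)
  show ?case
  proof (cases "l < 0")
    case True
    then show ?thesis by (cases s) (simp_all add: paths_ending_neg)
  next
    case False
    then show ?thesis
      by (subst level_gf_rec) (simp_all add: card_paths_ending_Suc fps_sum_nth Suc.IH)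
  qed
qed

lemma fps_nth_g_gf: "fps_nth ((inverse B_fps - 1) * Q_fps ^ j) n = of_nat (g n j)"
  by (simp add: sum_level_gf[symmetric] fps_sum_nth fps_nth_level_gf g_eq_sum_card_paths_ending)

lemma sums_g_level:
  assumes "norm z < 1/3"
  shows "(\<lambda>n. of_nat (g n j) * z ^ n) sums
           ((inverse (S_inv z) - 1) * (z * inverse (S_inv z)) ^ j)"
proof -
  have expansion: "(\<lambda>z. (inverse (S_inv z) - 1) * (z * inverse (S_inv z)) ^ j) has_fps_expansion
          (inverse B_fps - 1) * Q_fps ^ j"
    unfolding Q_fps_def
    by (intro fps_expansion_intros has_fps_expansion_S_inv) (simp_all add: B_fps_nth_0)
  have "S_inv z \<noteq> 0" if "z \<in> ball 0 (1/3)" for z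
    using that S_inv_nonzero by simp
  then have holomorphic: "(\<lambda>z. (inverse (S_inv z) - 1) * (z * inverse (S_inv z)) ^ j)
               holomorphic_on eball 0 (ereal (1/3))"
    unfolding eball_ereal by (intro holomorphic_intros S_inv_holomorphic)
  have "(\<lambda>n. fps_nth ((inverse B_fps - 1) * Q_fps ^ j) n * z ^ n) sums
          ((inverse (S_inv z) - 1) * (z * inverse (S_inv z)) ^ j)"
    using assms by (intro has_fps_expansion_imp_sums_complex[OF expansion holomorphic]) simp
  then show ?thesis
    by (simp add: fps_nth_g_gf)
qed

section \<open>Summation over the levels\<close>

lemma has_sum_geometric_real:
  "0 \<le> (x :: real) \<Longrightarrow> x < 1 \<Longrightarrow> ((\<lambda>n. x ^ n) has_sum (1 / (1 - x))) UNIV"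
  by (rule sums_nonneg_imp_has_sum[OF geometric_sums]) auto

lemma abs_summable_on_geometric_pairs:
  fixes x y :: real
  assumes "0 \<le> x" "x < 1" "0 \<le> y" "y < 1"
  shows "Infinite_Sum.abs_summable_on (\<lambda>(n, j). x ^ n * y ^ j) UNIV"
proof -
  have row: "((\<lambda>j. x ^ n * y ^ j) has_sum (x ^ n * (1 / (1 - y)))) UNIV" for n
    using assms by (intro has_sum_cmult_right has_sum_geometric_real)
  have rows: "((\<lambda>n. x ^ n * (1 / (1 - y))) has_sum (1 / (1 - x) * (1 / (1 - y)))) UNIV"
    using assms by (intro has_sum_cmult_left has_sum_geometric_real)
  show ?thesis
    unfolding UNIV_Times_UNIV[symmetric]
  proof (subst Infinite_Sum.abs_summable_on_Sigma_iff, intro conjI ballI)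
    fix n :: nat
    show "Infinite_Sum.abs_summable_on (\<lambda>j. (\<lambda>(n, j). x ^ n * y ^ j) (n, j)) UNIV"
      using row[of n] assms by (auto simp: summable_on_def)
  next
    have "(\<Sum>\<^sub>\<infinity>j. norm ((\<lambda>(n, j). x ^ n * y ^ j) (n, j))) = x ^ n * (1 / (1 - y))" for n
      using row[of n] assms by (simp add: infsumI)
    then show "Infinite_Sum.abs_summable_on
                 (\<lambda>n. \<Sum>\<^sub>\<infinity>j\<in>UNIV. norm ((\<lambda>(n, j). x ^ n * y ^ j) (n, j))) UNIV"
      using rows assms by (auto simp: summable_on_def)
  qed
qed

lemma has_sum_double_series:
  fixes f :: "nat \<times> nat \<Rightarrow> 'a :: banach"
  assumes bound: "\<And>n j. norm (f (n, j)) \<le> x ^ n * y ^ j" and "x < 1" "y < 1"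
    and columns: "\<And>j. (\<lambda>n. f (n, j)) sums c j" and "c sums s"
  shows "(f has_sum s) UNIV"
proof -
  have "0 \<le> x" "0 \<le> y"
    using order_trans[OF norm_ge_zero bound[of 1 0]] order_trans[OF norm_ge_zero bound[of 0 1]]
    by simp_all
  have "Infinite_Sum.abs_summable_on f UNIV"
  proof (rule Infinite_Sum.abs_summable_on_comparison_test)
    show "Infinite_Sum.abs_summable_on (\<lambda>(n, j). x ^ n * y ^ j) UNIV"
      using \<open>0 \<le> x\<close> \<open>0 \<le> y\<close> assms by (intro abs_summable_on_geometric_pairs)
    fix p :: "nat \<times> nat"
    show "norm (f p) \<le> norm (case p of (n, j) \<Rightarrow> x ^ n * y ^ j)"
      using bound \<open>0 \<le> x\<close> \<open>0 \<le> y\<close> by (cases p) simp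
  qed
  then have total: "(f has_sum infsum f UNIV) UNIV"
    by (simp add: abs_summable_summable)
  then have swapped: "((\<lambda>(j, n). f (n, j)) has_sum infsum f UNIV) (UNIV \<times> UNIV)"
    by (intro has_sum_swap[THEN iffD1]) simp
  have column_sums: "((\<lambda>n. f (n, j)) has_sum c j) UNIV" for j
  proof (rule norm_summable_imp_has_sum[OF _ columns])
    have "summable (\<lambda>n. x ^ n * y ^ j)"
      using \<open>0 \<le> x\<close> \<open>x < 1\<close> by (intro summable_mult2 summable_geometric) simp
    then show "summable (\<lambda>n. norm (f (n, j)))"
      by (rule summable_comparison_test') (use bound in simp)
  qed
  have "(c has_sum infsum f UNIV) UNIV"
    by (rule has_sum_SigmaD[OF swapped]) (simp add: column_sums)
  then have "c sums infsum f UNIV"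
    by (rule has_sum_imp_sums)
  then have "infsum f UNIV = s"
    using \<open>c sums s\<close> by (rule sums_unique2)
  with total show ?thesis
    by simp
qed

lemma sums_g_closed_form:
  assumes "0 < norm z" "norm z < 1/3"
  shows "(\<lambda>n. of_nat (g n j) * z ^ n) sums
           ((3 * z^2 - 3 + Wf z) / (2 * (z^2 - 2)) * z ^ j * Sf z ^ (j + 1))"
proof -
  have "z \<noteq> 0" "z^2 \<noteq> 2" "S_inv z \<noteq> 0"
    using assms power2_neq_2 S_inv_nonzero by auto
  then have "(inverse (S_inv z) - 1) * (z * inverse (S_inv z)) ^ j =
               (1 - S_inv z) * z ^ j * Sf z ^ (j + 1)"
    by (simp add: Sf_eq_inverse_S_inv power_mult_distrib field_simps)
  also have "\<dots> = (3 * z^2 - 3 + Wf z) / (2 * (z^2 - 2)) * z ^ j * Sf z ^ (j + 1)"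
    using \<open>z^2 \<noteq> 2\<close> by (simp add: one_minus_S_inv)
  finally show ?thesis
    using sums_g_level[OF assms(2), of j] by simp
qed

lemma norm_geometric_ratio_less_1:
  assumes "norm z < 1/3" "norm u < 1/3"
  shows "norm (z * inverse (S_inv z) * u) < 1"
proof -
  have "norm z * norm u \<le> norm z * (1/3)"
    using assms by (intro mult_left_mono) auto
  with assms norm_S_inv_gt[of z] have "norm z * norm u < norm (S_inv z)"
    by linarith
  then show ?thesis
    using S_inv_nonzero[OF assms(1)]
    by (simp add: norm_mult norm_divide divide_inverse[symmetric] mult_ac)
qed

lemma geometric_sum_closed_form:
  assumes "0 < norm z" "norm z < 1/3" "norm u < 1/3"
  shows "(inverse (S_inv z) - 1) / (1 - z * inverse (S_inv z) * u) =
           (3 * z^2 - 3 + Wf z) / (2 * z * (2 - z^2) * (u - s1 z))"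
proof -
  define b where "b = S_inv z"
  define w where "w = z * inverse b * u"
  have "z \<noteq> 0" "z^2 \<noteq> 2" "b \<noteq> 0"
    using assms power2_neq_2 S_inv_nonzero by (auto simp: b_def)
  have "w \<noteq> 1"
    using norm_geometric_ratio_less_1[OF assms(2,3)] by (auto simp: w_def b_def)
  have "z * s1 z = b"
    using \<open>z \<noteq> 0\<close> \<open>z^2 \<noteq> 2\<close> by (simp add: z_times_s1 Sf_eq_inverse_S_inv b_def)
  have "s1 z \<noteq> u"
  proof
    assume "s1 z = u"
    then have "w = inverse b * (z * s1 z)"
      by (simp add: w_def mult_ac)
    with \<open>z * s1 z = b\<close> \<open>b \<noteq> 0\<close> \<open>w \<noteq> 1\<close> show False
      by simp
  qed
  have "(inverse b - 1) / (1 - w) = (1 - b) / (z * (s1 z - u))"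
    using \<open>b \<noteq> 0\<close> \<open>w \<noteq> 1\<close> \<open>z * s1 z = b\<close> by (auto simp: w_def field_simps)
  also have "\<dots> = (3 * z^2 - 3 + Wf z) / (2 * z * (2 - z^2) * (u - s1 z))"
    using \<open>z \<noteq> 0\<close> \<open>z^2 \<noteq> 2\<close> \<open>s1 z \<noteq> u\<close>
    by (simp add: b_def one_minus_S_inv field_simps)
  finally show ?thesis
    by (simp add: b_def w_def)
qed

lemma norm_g_term_le:
  fixes z u :: "'a :: real_normed_field"
  shows "norm (of_nat (g n j) * z ^ n * u ^ j) \<le> (3 * norm z) ^ n * norm u ^ j"
proof -
  have "real (g n j) \<le> 3 ^ n"
    using g_le[of n j] by (metis of_nat_le_iff of_nat_numeral of_nat_power)
  then show ?thesis
    by (simp add: norm_mult norm_power power_mult_distrib mult_right_mono)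
qed

lemma has_sum_g_closed_form:
  assumes "0 < norm z" "norm z < 1/3" "norm u < 1/3"
  shows "((\<lambda>(n, j). of_nat (g n j) * z ^ n * u ^ j) has_sum
           ((3 * z^2 - 3 + Wf z) / (2 * z * (2 - z^2) * (u - s1 z)))) UNIV"
proof -
  define w where "w = z * inverse (S_inv z) * u"
  have columns: "(\<lambda>n. of_nat (g n j) * z ^ n * u ^ j) sums ((inverse (S_inv z) - 1) * w ^ j)" for j
    using sums_mult2[OF sums_g_level[OF assms(2), of j], of "u ^ j"]
    by (simp add: w_def power_mult_distrib mult_ac)
  have "(\<lambda>j. (inverse (S_inv z) - 1) * w ^ j) sums ((inverse (S_inv z) - 1) / (1 - w))"
    using sums_mult[OF geometric_sums[OF norm_geometric_ratio_less_1[OF assms(2,3)]]]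
    by (simp add: w_def divide_inverse)
  then have "(\<lambda>j. (inverse (S_inv z) - 1) * w ^ j) sums
               ((3 * z^2 - 3 + Wf z) / (2 * z * (2 - z^2) * (u - s1 z)))"
    using geometric_sum_closed_form[OF assms] by (simp add: w_def)
  with assms columns norm_g_term_le show ?thesis
    by (intro has_sum_double_series[where f = "\<lambda>(n, j). of_nat (g n j) * z ^ n * u ^ j"
          and x = "3 * norm z" and y = "norm u"]) auto
qed

theorem theorem3:
  shows "\<exists>r>0.
    (\<forall>z u::complex. 0 < norm z \<and> norm z < r \<and> norm u < r \<longrightarrow>
       ((\<lambda>(n, j). of_nat (g n j) * z ^ n * u ^ j) has_sum
          ((3 * z^2 - 3 + Wf z) / (2 * z * (2 - z^2) * (u - s1 z)))) UNIV) \<and>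
    (\<forall>j::nat. \<forall>z::complex. 0 < norm z \<and> norm z < r \<longrightarrow>
       (\<lambda>n. of_nat (g n j) * z ^ n) sums
          ((3 * z^2 - 3 + Wf z) / (2 * (z^2 - 2)) * z ^ j * Sf z ^ (j + 1)))"
  by (intro exI[of _ "1/3"] conjI allI impI)
     (blast intro: has_sum_g_closed_form sums_g_closed_form | simp)+

end
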